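(* Let $1 \leq p < \infty$ and $w\in A_p$. Let $\varphi$ be a nonnegative function on $\mathbb{R}^n \times (0,\infty)$ such that $r \mapsto \varphi(a,r)$ is increasing for each $a\in \mathbb{R}^n$. Then there is a constant $C>0$, independent of $a\in\mathbb{R}^n$, $r>0$ and $\varphi$, such that for every ball $B(a,r)$, $$\varphi(a,r) \leq C\, w(B(a,r))^{\frac{1}{p}} \sup_{r < s < \infty} \frac{\varphi(a,s)}{w(B(a,s))^{\frac{1}{p}}}$$ and $$\varphi(a,r) \leq C\, w(B(a,r))^{\frac{1}{p}} \int_r^\infty \frac{\varphi(a,s)}{w(B(a,s))^{\frac{1}{p}}} \frac{ds}{s}.$$
   Context: $B(a,r)$ is the open ball of center $a$ and radius $r$, and $w(E)=\int_E w(x)\,dx$. A weight is a nonnegative locally integrable function on $\mathbb{R}^n$ with values in $(0,\infty)$ a.e. For $1<p<\infty$, $A_p$ is the set of weights $w$ with $\left(\frac{1}{|B|}\int_B w\right)\left(\frac{1}{|B|}\int_B w^{-\frac{1}{p-1}}\right)^{p-1}\le C$ for all balls $B$; $A_1$ is the set of weights with $\frac{1}{|B|}\int_B w\le C\|w\|_{L^\infty(B)}$ for all balls $B$ (as printed in the paper; equivalently used as $\frac{1}{|B|}\int_B w\cdot\|w^{-1}\|_{L^\infty(B)}\le C$). *)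

theory Defs
  imports "HOL-Analysis.Analysis"
begin

definition weight :: "('a::euclidean_space \<Rightarrow> real) \<Rightarrow> bool" where
  "weight w \<longleftrightarrow> (\<forall>x. 0 \<le> w x) \<and> (\<forall>K. compact K \<longrightarrow> set_integrable lebesgue K w)
     \<and> (AE x in lebesgue. 0 < w x)"

definition wmeasure :: "('a::euclidean_space \<Rightarrow> real) \<Rightarrow> 'a set \<Rightarrow> real" where
  "wmeasure w E = (LINT x:E|lebesgue. w x)"

text \<open>Muckenhoupt class A_1: average of w over B times the L-infinity norm of 1/w on B
  is bounded, i.e. avg_B w \<le> C w(x) for a.e. x in B.\<close>
definition A1 :: "('a::euclidean_space \<Rightarrow> real) \<Rightarrow> bool" where
  "A1 w \<longleftrightarrow> weight w \<and> (\<exists>C. \<forall>a r. 0 < r \<longrightarrow>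
     (AE x in lebesgue. x \<in> ball a r \<longrightarrow>
        wmeasure w (ball a r) / measure lebesgue (ball a r) \<le> C * w x))"

definition Ap_gt1 :: "real \<Rightarrow> ('a::euclidean_space \<Rightarrow> real) \<Rightarrow> bool" where
  "Ap_gt1 p w \<longleftrightarrow> weight w \<and> (\<exists>C. \<forall>a r. 0 < r \<longrightarrow>
     set_integrable lebesgue (ball a r) (\<lambda>x. w x powr (- 1 / (p - 1))) \<and>
     (wmeasure w (ball a r) / measure lebesgue (ball a r)) *
     ((LINT x:ball a r|lebesgue. w x powr (- 1 / (p - 1))) / measure lebesgue (ball a r))
        powr (p - 1) \<le> C)"

definition Ap :: "real \<Rightarrow> ('a::euclidean_space \<Rightarrow> real) \<Rightarrow> bool" where
  "Ap p w \<longleftrightarrow> (if p = 1 then A1 w else Ap_gt1 p w)"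

end

theory Submission
  imports Defs
begin

text \<open>
  An A_p weight is doubling. For p > 1, Hoelder's inequality applied to 1 = w^(1/p) w^(-1/p)
  on a measurable subset E of a ball B, together with the A_p condition on B, gives
  (|E|/|B|)^p w(B) <= C w(E); for p = 1 the same follows by integrating the A_1 condition
  over E. With E = B(a,r) and B = B(a,2r) this says w(B(a,2r)) <= D w(B(a,r)), so, as
  phi(a,-) increases, phi(a,r) / (D w(B(a,r)))^(1/p) <= phi(a,s) / w(B(a,s))^(1/p) for every
  s in (r,2r]. Taking s = 2r gives the supremum bound; integrating over (r,2r] against
  ds/s >= ds/(2r) gives the integral bound, both with the constant 2 D^(1/p).
\<close>

lemma set_integral_nonneg_AE:
  fixes f :: "'a \<Rightarrow> real"
  assumes "AE x\<in>A in M. 0 \<le> f x"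
  shows "0 \<le> (LINT x:A|M. f x)"
  unfolding set_lebesgue_integral_def
  using assms by (intro integral_nonneg_AE) (auto elim!: eventually_mono simp: indicator_def)

lemma set_integral_pos_AE:
  fixes f :: "'a \<Rightarrow> real"
  assumes f: "set_integrable M A f" and A: "A \<in> sets M" and "emeasure M A > 0"
    and pos: "AE x\<in>A in M. 0 < f x"
  shows "(LINT x:A|M. f x) > 0"
proof -
  have int: "integrable M (\<lambda>x. indicator A x * f x)"
    using f by (simp add: set_integrable_def)
  have nonneg: "AE x in M. 0 \<le> indicator A x * f x"
    using pos by eventually_elim (auto simp: indicator_def)
  have "\<not> (AE x in M. indicator A x * f x = 0)"
  proof
    assume "AE x in M. indicator A x * f x = 0"
    with pos have "AE x\<in>A in M. False"
      by eventually_elim auto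
    with A have "A \<in> null_sets M"
      by (simp add: AE_iff_null_sets)
    with \<open>emeasure M A > 0\<close> show False
      by auto
  qed
  then show ?thesis
    using integral_nonneg_eq_0_iff_AE[OF int nonneg] integral_nonneg_AE[OF nonneg]
    unfolding set_lebesgue_integral_def by simp
qed

lemma set_integral_subset_mono:
  fixes f :: "'a \<Rightarrow> real"
  assumes f: "set_integrable M B f" and A: "A \<in> sets M" "A \<subseteq> B"
    and nonneg: "\<And>x. x \<in> B \<Longrightarrow> 0 \<le> f x"
  shows "(LINT x:A|M. f x) \<le> (LINT x:B|M. f x)"
proof -
  have "set_integrable M A f"
    using set_integrable_subset[OF f A] .
  then show ?thesis
    using f A nonneg unfolding set_lebesgue_integral_def set_integrable_def
    by (intro integral_mono) (auto simp: indicator_def)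
qed

lemma set_integrable_const:
  "A \<in> sets M \<Longrightarrow> emeasure M A < \<infinity> \<Longrightarrow> set_integrable M A (\<lambda>_. c :: real)"
  unfolding set_integrable_def by (intro integrable_scaleR_left integrable_real_indicator)

lemma emeasure_lebesgue_subset_ball_finite:
  assumes "E \<in> sets lebesgue" "E \<subseteq> ball a r"
  shows "emeasure lebesgue E < \<infinity>"
proof -
  have "emeasure lebesgue E \<le> emeasure lebesgue (ball a r)"
    using assms by (intro emeasure_mono) auto
  then show ?thesis
    using emeasure_lborel_ball_finite[of a r] by simp
qed

lemma measure_lebesgue_ball_double:
  assumes "0 \<le> r"
  shows "measure lebesgue (ball (a::'a::euclidean_space) (2 * r))
    = 2 ^ DIM('a) * measure lebesgue (ball a r)"
proof -
  have scale: "measure lebesgue (ball a s) = s ^ DIM('a) * measure lebesgue (ball (0::'a) 1)"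
    if "0 \<le> s" for s
    using emeasure_lebesgue_ball_conv_unit_ball[OF that, of a] emeasure_lborel_ball_finite[of "0::'a" 1]
    unfolding measure_def by (simp add: enn2real_mult that)
  show ?thesis
    using scale[of "2 * r"] scale[of r] assms by (simp add: power_mult_distrib)
qed

lemma weight_set_integrable_ball:
  assumes "weight w"
  shows "set_integrable lebesgue (ball a r) w"
proof -
  have "set_integrable lebesgue (cball a r) w"
    using assms compact_cball unfolding weight_def by blast
  then show ?thesis
    by (rule set_integrable_subset) auto
qed

lemma wmeasure_nonneg: "weight w \<Longrightarrow> 0 \<le> wmeasure w E"
  unfolding wmeasure_def weight_def by (intro set_integral_nonneg_AE) auto

lemma wmeasure_ball_pos:
  assumes "weight w" "0 < r"
  shows "0 < wmeasure w (ball a r)"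
  unfolding wmeasure_def
proof (rule set_integral_pos_AE[OF weight_set_integrable_ball[OF assms(1)]])
  show "emeasure lebesgue (ball a r) > 0"
    using content_ball_pos[OF assms(2), of a] emeasure_lborel_ball_finite[of a r]
    by (simp add: emeasure_eq_ennreal_measure)
  show "AE x\<in>ball a r in lebesgue. 0 < w x"
    using assms(1) unfolding weight_def by (auto elim!: eventually_mono)
qed simp

lemma wmeasure_ball_mono:
  assumes "weight w" "s \<le> t"
  shows "wmeasure w (ball a s) \<le> wmeasure w (ball a t)"
  unfolding wmeasure_def
  using assms by (intro set_integral_subset_mono[OF weight_set_integrable_ball]) (auto simp: weight_def)

lemma Ap_weight: "Ap p w \<Longrightarrow> weight w"
  unfolding Ap_def A1_def Ap_gt1_def by (auto split: if_splits)

lemma Young_weight_dual: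
  fixes p x u S :: real
  assumes p: "1 < p" and x: "0 < x" and u: "0 < u" and S: "0 < S"
  shows "1 / (u powr (1/p) * S powr (1 - 1/p))
    \<le> (1/p) * (x / u) + (1 - 1/p) * (x powr (-1/(p-1)) / S)"
proof -
  have "(x / u) powr (1/p) * (x powr (-1/(p-1)) / S) powr (1 - 1/p)
      \<le> (1/p) * (x / u) + (1 - 1/p) * (x powr (-1/(p-1)) / S)"
    using assms by (intro Youngs_inequality_0) auto
  \<comment> \<open>the left-hand side of Young's inequality does not depend on x\<close>
  moreover have "(x powr (-1/(p-1))) powr (1 - 1/p) = x powr (-1/p)"
    using p by (simp add: powr_powr field_simps)
  moreover have "x powr (1/p) * x powr (-1/p) = 1"
    using x by (simp add: powr_add[symmetric])
  ultimately show ?thesis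
    using x u S by (simp add: powr_divide field_simps)
qed

text \<open>Hoelder's inequality for 1 = w^(1/p) w^(-1/p): integrate Young's inequality for
  w/w(E) and sigma/sigma(E), where sigma = w^(-1/(p-1)); both have integral 1 over E.\<close>

lemma measure_le_wmeasure_dual_Hoelder:
  fixes w :: "'a::euclidean_space \<Rightarrow> real"
  assumes p: "1 < p" and E: "E \<in> sets lebesgue" "emeasure lebesgue E < \<infinity>"
    and w_int: "set_integrable lebesgue E w"
    and \<sigma>_int: "set_integrable lebesgue E (\<lambda>x. w x powr (-1/(p-1)))"
    and w_pos: "AE x in lebesgue. 0 < w x"
  shows "measure lebesgue E
    \<le> wmeasure w E powr (1/p) * (LINT x:E|lebesgue. w x powr (-1/(p-1))) powr (1 - 1/p)"
proof (cases "emeasure lebesgue E = 0")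
  case True
  then show ?thesis
    by (simp add: measure_def)
next
  case False
  then have E_pos: "emeasure lebesgue E > 0"
    by (simp add: zero_less_iff_neq_zero)
  define \<sigma> where "\<sigma> x = w x powr (-1/(p-1))" for x
  define u where "u = wmeasure w E"
  define S where "S = (LINT x:E|lebesgue. \<sigma> x)"
  have \<sigma>_int': "set_integrable lebesgue E \<sigma>"
    using \<sigma>_int unfolding \<sigma>_def .
  have u: "0 < u"
    unfolding u_def wmeasure_def using w_pos
    by (intro set_integral_pos_AE[OF w_int E(1) E_pos]) (auto elim!: eventually_mono)
  have S: "0 < S"
    unfolding S_def using w_pos
    by (intro set_integral_pos_AE[OF \<sigma>_int' E(1) E_pos]) (auto simp: \<sigma>_def elim!: eventually_mono)
  define K where "K = 1 / (u powr (1/p) * S powr (1 - 1/p))"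
  have Young: "AE x\<in>E in lebesgue. K \<le> (1/(p*u)) * w x + ((1 - 1/p)/S) * \<sigma> x"
    using w_pos
  proof eventually_elim
    case (elim x)
    then show ?case
      using Young_weight_dual[OF p elim u S] unfolding K_def \<sigma>_def by (simp add: field_simps)
  qed
  have "measure lebesgue E * K = (LINT x:E|lebesgue. K)"
    using E by (simp add: set_integral_const)
  also have "\<dots> \<le> (LINT x:E|lebesgue. (1/(p*u)) * w x + ((1 - 1/p)/S) * \<sigma> x)"
    using E w_int \<sigma>_int' Young by (intro set_integral_mono_AE set_integrable_const) auto
  also have "\<dots> = (1/(p*u)) * u + ((1 - 1/p)/S) * S"
    using w_int \<sigma>_int' unfolding u_def S_def wmeasure_def by (simp add: set_integral_add)
  also have "\<dots> = 1"
    using u S p by (simp add: field_simps)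
  finally have "measure lebesgue E \<le> u powr (1/p) * S powr (1 - 1/p)"
    using u S by (simp add: K_def field_simps)
  then show ?thesis
    unfolding u_def S_def \<sigma>_def .
qed

lemma measure_powr_le_wmeasure_dual:
  fixes w :: "'a::euclidean_space \<Rightarrow> real"
  assumes p: "1 < p" and E: "E \<in> sets lebesgue" "emeasure lebesgue E < \<infinity>"
    and w_int: "set_integrable lebesgue E w"
    and \<sigma>_int: "set_integrable lebesgue E (\<lambda>x. w x powr (-1/(p-1)))"
    and w_pos: "AE x in lebesgue. 0 < w x"
  shows "measure lebesgue E powr p
    \<le> wmeasure w E * (LINT x:E|lebesgue. w x powr (-1/(p-1))) powr (p - 1)"
proof -
  define u where "u = wmeasure w E"
  define S where "S = (LINT x:E|lebesgue. w x powr (-1/(p-1)))"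
  have u: "0 \<le> u"
    unfolding u_def wmeasure_def using w_pos
    by (intro set_integral_nonneg_AE) (auto elim!: eventually_mono)
  have S: "0 \<le> S"
    unfolding S_def by (intro set_integral_nonneg_AE) simp
  have "measure lebesgue E powr p \<le> (u powr (1/p) * S powr (1 - 1/p)) powr p"
    using measure_le_wmeasure_dual_Hoelder[OF assms] p unfolding u_def S_def
    by (intro powr_mono2) auto
  also have "\<dots> = u * S powr (p - 1)"
  proof -
    have "(1 - 1/p) * p = p - 1"
      using p by (simp add: field_simps)
    then show ?thesis
      using u S p by (simp add: powr_mult powr_powr)
  qed
  finally show ?thesis
    unfolding u_def S_def .
qed

lemma powr_ratio_le_of_Ap_bound:
  fixes p e m v S u C :: real
  assumes e: "0 \<le> e" and m: "0 < m" and S: "0 < S" and v: "0 \<le> v"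
    and Hoelder: "e powr p \<le> u * S powr (p - 1)"
    and Ap: "(v / m) * (S / m) powr (p - 1) \<le> C"
  shows "(e / m) powr p * v \<le> C * u"
proof -
  have C: "0 \<le> C"
    using Ap m v by (meson divide_nonneg_pos order.trans powr_ge_zero mult_nonneg_nonneg)
  have "(e / m) powr p * v * S powr (p - 1) = e powr p * ((v / m) * (S / m) powr (p - 1))"
  proof -
    have "m powr p = m * m powr (p - 1)"
      using m powr_add[of m 1 "p - 1"] by simp
    then show ?thesis
      using e m S by (simp add: powr_divide field_simps)
  qed
  also have "\<dots> \<le> e powr p * C"
    using Ap by (intro mult_left_mono) auto
  also have "\<dots> \<le> C * u * S powr (p - 1)"
    using mult_left_mono[OF Hoelder C] by (simp add: mult.commute mult.left_commute)
  finally show ?thesis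
    using S by simp
qed

lemma Ap_gt1_ball_subset_ratio:
  fixes p :: real and w :: "'a::euclidean_space \<Rightarrow> real"
  defines "\<sigma> \<equiv> \<lambda>x. w x powr (- 1 / (p - 1))"
  assumes p: "1 < p" and W: "weight w" and r: "0 < r"
    and E: "E \<in> sets lebesgue" "E \<subseteq> ball a r"
    and \<sigma>_int: "set_integrable lebesgue (ball a r) \<sigma>"
    and Ap_ball: "(wmeasure w (ball a r) / measure lebesgue (ball a r)) *
      ((LINT x:ball a r|lebesgue. \<sigma> x) / measure lebesgue (ball a r)) powr (p - 1) \<le> C"
  shows "(measure lebesgue E / measure lebesgue (ball a r)) powr p * wmeasure w (ball a r)
    \<le> C * wmeasure w E"
proof -
  define S where "S = (LINT x:ball a r|lebesgue. \<sigma> x)"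
  have w_pos: "AE x in lebesgue. 0 < w x"
    using W unfolding weight_def by blast
  have m: "0 < measure lebesgue (ball a r)"
    using content_ball_pos[OF r, of a] by simp
  have S: "0 < S"
    unfolding S_def using w_pos content_ball_pos[OF r, of a] emeasure_lborel_ball_finite[of a r]
    by (intro set_integral_pos_AE[OF \<sigma>_int])
      (auto simp: \<sigma>_def emeasure_eq_ennreal_measure elim!: eventually_mono)
  have "measure lebesgue E powr p \<le> wmeasure w E * (LINT x:E|lebesgue. \<sigma> x) powr (p - 1)"
    unfolding \<sigma>_def
    using p E emeasure_lebesgue_subset_ball_finite[OF E] w_pos
      set_integrable_subset[OF weight_set_integrable_ball[OF W] E]
      set_integrable_subset[OF \<sigma>_int E, unfolded \<sigma>_def]
    by (intro measure_powr_le_wmeasure_dual) auto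
  also have "\<dots> \<le> wmeasure w E * S powr (p - 1)"
  proof -
    have "0 \<le> (LINT x:E|lebesgue. \<sigma> x)"
      by (intro set_integral_nonneg_AE) (simp add: \<sigma>_def)
    moreover have "(LINT x:E|lebesgue. \<sigma> x) \<le> S"
      unfolding S_def using E by (intro set_integral_subset_mono[OF \<sigma>_int]) (auto simp: \<sigma>_def)
    ultimately show ?thesis
      using p wmeasure_nonneg[OF W] by (intro mult_left_mono powr_mono2) auto
  qed
  finally show ?thesis
    using powr_ratio_le_of_Ap_bound[OF _ m S _ _ Ap_ball[folded S_def]] wmeasure_nonneg[OF W]
    by simp
qed

lemma Ap_gt1_subset_ratio:
  fixes w :: "'a::euclidean_space \<Rightarrow> real"
  assumes p: "1 < p" and A: "Ap_gt1 p w"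
  obtains C where "\<And>a r E. 0 < r \<Longrightarrow> E \<in> sets lebesgue \<Longrightarrow> E \<subseteq> ball a r \<Longrightarrow>
    (measure lebesgue E / measure lebesgue (ball a r)) powr p * wmeasure w (ball a r)
      \<le> C * wmeasure w E"
proof -
  have W: "weight w"
    using A unfolding Ap_gt1_def by blast
  obtain C where "\<And>a r. 0 < r \<Longrightarrow>
     set_integrable lebesgue (ball a r) (\<lambda>x. w x powr (- 1 / (p - 1))) \<and>
     (wmeasure w (ball a r) / measure lebesgue (ball a r)) *
     ((LINT x:ball a r|lebesgue. w x powr (- 1 / (p - 1))) / measure lebesgue (ball a r))
        powr (p - 1) \<le> C"
    using A unfolding Ap_gt1_def by blast
  then show ?thesis
    using Ap_gt1_ball_subset_ratio[OF p W] that by blast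
qed

lemma A1_subset_ratio:
  fixes w :: "'a::euclidean_space \<Rightarrow> real"
  assumes A: "A1 w"
  obtains C where "\<And>a r E. 0 < r \<Longrightarrow> E \<in> sets lebesgue \<Longrightarrow> E \<subseteq> ball a r \<Longrightarrow>
    measure lebesgue E / measure lebesgue (ball a r) * wmeasure w (ball a r) \<le> C * wmeasure w E"
proof -
  have W: "weight w"
    using A unfolding A1_def by blast
  obtain C where C: "\<And>a r. 0 < r \<Longrightarrow> AE x in lebesgue. x \<in> ball a r \<longrightarrow>
        wmeasure w (ball a r) / measure lebesgue (ball a r) \<le> C * w x"
    using A unfolding A1_def by blast
  have "measure lebesgue E / measure lebesgue (ball a r) * wmeasure w (ball a r) \<le> C * wmeasure w E"
    if r: "0 < r" and E: "E \<in> sets lebesgue" "E \<subseteq> ball a r" for a r E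
  proof -
    define c where "c = wmeasure w (ball a r) / measure lebesgue (ball a r)"
    have E_finite: "emeasure lebesgue E < \<infinity>"
      using emeasure_lebesgue_subset_ball_finite[OF E] .
    have "measure lebesgue E * c = (LINT x:E|lebesgue. c)"
      using E E_finite by (simp add: set_integral_const)
    also have "\<dots> \<le> (LINT x:E|lebesgue. C * w x)"
      using E E_finite C[OF r, of a] set_integrable_subset[OF weight_set_integrable_ball[OF W] E]
      by (intro set_integral_mono_AE set_integrable_const set_integrable_mult_right)
        (auto simp: c_def elim!: eventually_mono)
    also have "\<dots> = C * wmeasure w E"
      by (simp add: wmeasure_def)
    finally show ?thesis
      by (simp add: c_def)
  qed
  then show ?thesis
    using that by blast
qed

lemma Ap_subset_ratio:
  fixes w :: "'a::euclidean_space \<Rightarrow> real"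
  assumes "1 \<le> p" "Ap p w"
  obtains C where "\<And>a r E. 0 < r \<Longrightarrow> E \<in> sets lebesgue \<Longrightarrow> E \<subseteq> ball a r \<Longrightarrow>
    (measure lebesgue E / measure lebesgue (ball a r)) powr p * wmeasure w (ball a r)
      \<le> C * wmeasure w E"
proof (cases "p = 1")
  case True
  then obtain C where C: "\<And>a r E. 0 < r \<Longrightarrow> E \<in> sets lebesgue \<Longrightarrow> E \<subseteq> ball a r \<Longrightarrow>
    measure lebesgue E / measure lebesgue (ball a r) * wmeasure w (ball a r) \<le> C * wmeasure w E"
    using assms A1_subset_ratio[of w] unfolding Ap_def by auto
  show ?thesis
  proof (rule that)
    fix a :: 'a and r E
    assume "0 < r" "E \<in> sets lebesgue" "E \<subseteq> ball a r"
    then show "(measure lebesgue E / measure lebesgue (ball a r)) powr p * wmeasure w (ball a r)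
      \<le> C * wmeasure w E"
      using C[of r E a] True by (simp add: powr_one)
  qed
next
  case False
  then have "1 < p" "Ap_gt1 p w"
    using assms unfolding Ap_def by auto
  then show ?thesis
    using Ap_gt1_subset_ratio that by blast
qed

lemma Ap_doubling:
  fixes w :: "'a::euclidean_space \<Rightarrow> real"
  assumes "1 \<le> p" "Ap p w"
  obtains D where "D > 0" "\<And>a r. 0 < r \<Longrightarrow> wmeasure w (ball a (2 * r)) \<le> D * wmeasure w (ball a r)"
proof -
  obtain C where C: "\<And>a r E. 0 < r \<Longrightarrow> E \<in> sets lebesgue \<Longrightarrow> E \<subseteq> ball a r \<Longrightarrow>
    (measure lebesgue E / measure lebesgue (ball a r)) powr p * wmeasure w (ball a r)
      \<le> C * wmeasure w E"
    using Ap_subset_ratio[OF assms] by blast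
  define k :: real where "k = 2 ^ DIM('a)"
  have "wmeasure w (ball a (2 * r)) \<le> max 1 (C * k powr p) * wmeasure w (ball a r)"
    if r: "0 < r" for a r
  proof -
    have "ball a r \<subseteq> ball a (2 * r)"
      using r by auto
    from C[OF _ _ this] r
    have "(1 / k) powr p * wmeasure w (ball a (2 * r)) \<le> C * wmeasure w (ball a r)"
      using measure_lebesgue_ball_double[of r a] content_ball_pos[OF r, of a]
      by (simp add: k_def)
    then have "wmeasure w (ball a (2 * r)) \<le> C * k powr p * wmeasure w (ball a r)"
      by (simp add: k_def powr_divide field_simps)
    also have "\<dots> \<le> max 1 (C * k powr p) * wmeasure w (ball a r)"
      using wmeasure_nonneg[OF Ap_weight[OF assms(2)]] by (intro mult_right_mono) auto
    finally show ?thesis .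
  qed
  then show ?thesis
    using that[of "max 1 (C * k powr p)"] by simp
qed

lemma nn_integral_greaterThan_ge_half:
  fixes g :: "real \<Rightarrow> real"
  assumes r: "0 < r" and c: "0 \<le> c" and le: "\<And>s. r < s \<Longrightarrow> s \<le> 2 * r \<Longrightarrow> c \<le> g s"
  shows "ennreal (c / 2) \<le> (\<integral>\<^sup>+ s. indicator {r<..} s * ennreal (g s / s) \<partial>lborel)"
proof -
  have "ennreal (c / 2) = (\<integral>\<^sup>+ s. ennreal (c / (2 * r)) * indicator {r<..2 * r} s \<partial>lborel)"
    using r c by (simp add: nn_integral_cmult_indicator ennreal_mult[symmetric])
  also have "\<dots> \<le> (\<integral>\<^sup>+ s. indicator {r<..} s * ennreal (g s / s) \<partial>lborel)"
  proof (intro nn_integral_mono)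
    fix s :: real
    show "ennreal (c / (2 * r)) * indicator {r<..2 * r} s \<le> indicator {r<..} s * ennreal (g s / s)"
    proof (cases "r < s \<and> s \<le> 2 * r")
      case True
      then have "c / (2 * r) \<le> g s / s"
        using r c le[of s] by (intro frac_le) auto
      then show ?thesis
        using True by (simp add: ennreal_leI)
    qed auto
  qed
  finally show ?thesis .
qed

lemma increasing_le_SUP_and_nn_integral_of_doubling:
  fixes \<phi> V :: "real \<Rightarrow> real"
  assumes D: "0 < D" and q: "0 < q" and r: "0 < r"
    and V_pos: "\<And>s. 0 < s \<Longrightarrow> 0 < V s"
    and V_mono: "\<And>s t. 0 < s \<Longrightarrow> s \<le> t \<Longrightarrow> V s \<le> V t"
    and V_double: "V (2 * r) \<le> D * V r"
    and \<phi>_nonneg: "0 \<le> \<phi> r" and \<phi>_mono: "\<And>s. r \<le> s \<Longrightarrow> \<phi> r \<le> \<phi> s"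
  shows "ennreal (\<phi> r) \<le> ennreal (2 * D powr q) * ennreal (V r powr q) *
      (SUP s\<in>{r<..}. ennreal (\<phi> s / V s powr q))"
    and "ennreal (\<phi> r) \<le> ennreal (2 * D powr q) * ennreal (V r powr q) *
      (\<integral>\<^sup>+ s. indicator {r<..} s * ennreal (\<phi> s / V s powr q / s) \<partial>lborel)"
proof -
  define c where "c = \<phi> r / (D * V r) powr q"
  have c: "0 \<le> c"
    unfolding c_def using \<phi>_nonneg by simp
  have lower: "c \<le> \<phi> s / V s powr q" if s: "r < s" "s \<le> 2 * r" for s
  proof -
    have "V s \<le> D * V r"
      using V_mono[of s "2 * r"] V_double s r by linarith
    then have "V s powr q \<le> (D * V r) powr q"
      using V_pos[of s] s r q by (intro powr_mono2) auto
    then show ?thesis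
      unfolding c_def using \<phi>_nonneg \<phi>_mono[of s] V_pos[of s] s r by (intro frac_le) auto
  qed
  have "\<phi> r = (2 * D powr q) * V r powr q * (c / 2)"
    using D V_pos[OF r] unfolding c_def by (simp add: powr_mult)
  then have \<phi>_eq: "ennreal (\<phi> r) = ennreal (2 * D powr q) * ennreal (V r powr q) * ennreal (c / 2)"
    using c by (simp add: ennreal_mult[symmetric])
  have "c / 2 \<le> \<phi> (2 * r) / V (2 * r) powr q"
    using lower[of "2 * r"] r c by linarith
  then have "ennreal (c / 2) \<le> ennreal (\<phi> (2 * r) / V (2 * r) powr q)"
    by (rule ennreal_leI)
  also have "\<dots> \<le> (SUP s\<in>{r<..}. ennreal (\<phi> s / V s powr q))"
    using r by (intro SUP_upper) auto
  finally show "ennreal (\<phi> r) \<le> ennreal (2 * D powr q) * ennreal (V r powr q) *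
      (SUP s\<in>{r<..}. ennreal (\<phi> s / V s powr q))"
    unfolding \<phi>_eq by (intro mult_left_mono) auto
  show "ennreal (\<phi> r) \<le> ennreal (2 * D powr q) * ennreal (V r powr q) *
      (\<integral>\<^sup>+ s. indicator {r<..} s * ennreal (\<phi> s / V s powr q / s) \<partial>lborel)"
    using nn_integral_greaterThan_ge_half[OF r c lower]
    unfolding \<phi>_eq by (intro mult_left_mono) auto
qed

theorem lemma2p11:
  fixes p :: real and w :: "'a::euclidean_space \<Rightarrow> real"
  assumes "1 \<le> p" and "Ap p w"
  shows "\<exists>C>0. \<forall>\<phi> :: 'a \<Rightarrow> real \<Rightarrow> real.
    (\<forall>a s. 0 < s \<longrightarrow> 0 \<le> \<phi> a s) \<longrightarrow>
    (\<forall>a s t. 0 < s \<longrightarrow> s \<le> t \<longrightarrow> \<phi> a s \<le> \<phi> a t) \<longrightarrow>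
    (\<forall>a r. 0 < r \<longrightarrow>
      ennreal (\<phi> a r) \<le> ennreal C * ennreal (wmeasure w (ball a r) powr (1 / p)) *
        (SUP s\<in>{r<..}. ennreal (\<phi> a s / wmeasure w (ball a s) powr (1 / p)))
      \<and>
      ennreal (\<phi> a r) \<le> ennreal C * ennreal (wmeasure w (ball a r) powr (1 / p)) *
        (\<integral>\<^sup>+ s. indicator {r<..} s *
           ennreal (\<phi> a s / wmeasure w (ball a s) powr (1 / p) / s) \<partial>lborel))"
proof -
  have W: "weight w"
    using Ap_weight[OF assms(2)] .
  obtain D where D: "D > 0" "\<And>a r. 0 < r \<Longrightarrow> wmeasure w (ball a (2 * r)) \<le> D * wmeasure w (ball a r)"
    using Ap_doubling[OF assms] by blast
  have q: "0 < 1 / p"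
    using assms(1) by simp
  note bounds = increasing_le_SUP_and_nn_integral_of_doubling
    [where V = "\<lambda>s. wmeasure w (ball a s)" for a,
      OF D(1) q _ wmeasure_ball_pos[OF W] wmeasure_ball_mono[OF W] D(2)]
  show ?thesis
    using D(1) by (intro exI[of _ "2 * D powr (1 / p)"] conjI allI impI bounds) auto
qed

end
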